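(* Fix parameters $0<\varepsilon<f<(1+\varepsilon)/2<1$ and $\sigma>0$. Let $pqr$ be a non-degenerate triangle in $\mathbb{R}^2$ with a designated apex (one of $p,q,r$) and a fixed ordering of its base vertices. Then there exists $\Delta>0$, depending only on the triangle $pqr$, its apex designation, $\varepsilon$, $f$ and $\sigma$, such that the following holds: whenever real values $\tau(p)\le\tau(q)\le\tau(r)$ make the triangle satisfy the adaptive progress constraint $\sigma$, then for every $\delta\in[0,\Delta]$ the values $\tau'(p)=\tau(p)+\delta$, $\tau'(q)=\tau(q)$, $\tau'(r)=\tau(r)$ also make the triangle satisfy the adaptive progress constraint $\sigma$ (with the same apex and base ordering).
   Context: Values at the vertices are extended affinely over the plane; $\tau$ of a midpoint means the value of that affine function. Diminished width: for a triangle written $abc$ with its apex listed first, $\mathrm{dw}(abc):=\min\{(1-\varepsilon)\operatorname{dist}(a,\operatorname{aff}(bc)),\,(1-f)\operatorname{dist}(b,\operatorname{aff}(ac)),\,(1-f)\operatorname{dist}(c,\operatorname{aff}(ab))\}$. Adaptive progress constraint $\sigma$: for a triangle with apex $a$ and base vertices $b,c$ (in the given order), with $d$ the midpoint of $bc$ and $e$ the midpoint of $ac$, require $|\tau(a)-\tau(b)|\le 2\,\mathrm{dw}(dca)\,\sigma$, $|\tau(a)-\tau(d)|\le\mathrm{dw}(abc)\,\sigma$, $|\tau(a)-\tau(c)|\le 2\,\mathrm{dw}(dab)\,\sigma$, and $|\tau(b)-\tau(c)|\le 4\,\mathrm{dw}(ead)\,\sigma$ (first-listed vertex in each $\mathrm{dw}$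 is its apex). *)

theory Defs
  imports "HOL-Analysis.Analysis"
begin

text \<open>Diminished width of the triangle written x y z with apex x (first-listed vertex).\<close>
definition dw :: "real \<Rightarrow> real \<Rightarrow> real^2 \<Rightarrow> real^2 \<Rightarrow> real^2 \<Rightarrow> real" where
  "dw \<epsilon> f x y z =
     min ((1 - \<epsilon>) * infdist x (affine hull {y, z}))
         (min ((1 - f) * infdist y (affine hull {x, z}))
              ((1 - f) * infdist z (affine hull {x, y})))"

text \<open>Adaptive progress constraint for the triangle with apex a and base vertices b, c
  (in this order), with values ta, tb, tc at a, b, c. The value of the affine extension
  at the midpoint d of bc is (tb + tc)/2.\<close>
definition apc :: "real \<Rightarrow> real \<Rightarrow> real \<Rightarrow> real^2 \<Rightarrow> real^2 \<Rightarrow> real^2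
                    \<Rightarrow> real \<Rightarrow> real \<Rightarrow> real \<Rightarrow> bool" where
  "apc \<epsilon> f \<sigma> a b c ta tb tc \<longleftrightarrow>
     (let d = midpoint b c; e = midpoint a c; td = (tb + tc) / 2 in
        \<bar>ta - tb\<bar> \<le> 2 * dw \<epsilon> f d c a * \<sigma> \<and>
        \<bar>ta - td\<bar> \<le> dw \<epsilon> f a b c * \<sigma> \<and>
        \<bar>ta - tc\<bar> \<le> 2 * dw \<epsilon> f d a b * \<sigma> \<and>
        \<bar>tb - tc\<bar> \<le> 4 * dw \<epsilon> f e a d * \<sigma>)"

end

theory Submission
  imports Defs
begin

(* The constraint on a triangle abc (apex a, midpoints d of bc and e of ac) consists of four
   bounds |ta - tb| <= C1, |ta - td| <= C2, |ta - tc| <= C3, |tb - tc| <= C4, whose constants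
   are sigma times diminished widths of the triangles dca, abc, dab, ead.  If the raised value
   is the minimum of the three, every bound keeps holding for small delta, except that raising
   a base value lowers ta - td by delta/2 while ta - td may already be as low as -C3/2 (resp.
   -C1/2).  So delta can be as large as the "slack" min(C1, C2, C3, C4, 2C2 - C1, 2C2 - C3),
   and the theorem reduces to this slack being positive.

   The geometric part computes every distance to a line as (twice the area)/(base length),
   using the 2D cross product.  Then all diminished widths are positive for a nondegenerate
   triangle, and dw(dab) < dw(abc), dw(dca) < dw(abc), which follows by comparing the six
   heights term by term using epsilon < f < (1 + epsilon)/2 and Apollonius' median formula. *)

definition cross2 :: "real^2 \<Rightarrow> real^2 \<Rightarrow> real" where
  "cross2 u v = u$1 * v$2 - u$2 * v$1"

definition area2 :: "real^2 \<Rightarrow> real^2 \<Rightarrow> real^2 \<Rightarrow> real" where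
  "area2 x y z = \<bar>cross2 (y - x) (z - x)\<bar>"

lemma area2_swap12: "area2 x y z = area2 y x z"
  by (simp add: area2_def cross2_def abs_minus_commute algebra_simps)

lemma area2_swap23: "area2 x y z = area2 x z y"
  by (simp add: area2_def cross2_def abs_minus_commute algebra_simps)

lemma area2_pos_distinct:
  assumes "area2 x y z > 0" shows "x \<noteq> y" "x \<noteq> z" "y \<noteq> z"
  using assms by (auto simp: area2_def cross2_def)

lemma apollonius:
  fixes a b c :: "'a::real_inner"
  shows "4 * (dist a (midpoint b c))^2 = 2 * (dist a b)^2 + 2 * (dist a c)^2 - (dist b c)^2"
  by (simp add: dist_norm power2_norm_eq_inner midpoint_def inner_simps algebra_simps inner_commute)

lemma area2_midpoint:
  "area2 (midpoint b c) a b = area2 a b c / 2"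
  "area2 (midpoint a c) a (midpoint b c) = area2 a b c / 4"
proof -
  have "cross2 (a - midpoint b c) (b - midpoint b c) = cross2 (b - a) (c - a) / 2"
       "cross2 (a - midpoint a c) (midpoint b c - midpoint a c) = cross2 (b - a) (c - a) / 4"
    by (simp_all add: cross2_def midpoint_def field_simps)
  thus "area2 (midpoint b c) a b = area2 a b c / 2"
       "area2 (midpoint a c) a (midpoint b c) = area2 a b c / 4"
    by (simp_all add: area2_def)
qed

lemma cross2_zero_collinear:
  assumes "cross2 u v = 0" shows "collinear {0, u, v}"
proof (cases "u = 0")
  case False
  then obtain i where ui: "u$i \<noteq> 0" by (auto simp: vec_eq_iff)
  have "u$i * v$j = v$i * u$j" for j
    using assms exhaust_2[of i] exhaust_2[of j] by (auto simp: cross2_def algebra_simps)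
  hence "v = (v$i / u$i) *\<^sub>R u" using ui by (simp add: vec_eq_iff field_simps)
  thus ?thesis by (auto simp: collinear_lemma)
qed (simp add: collinear_lemma)

lemma noncollinear_area2_pos:
  assumes "\<not> collinear {a, b, c}" shows "area2 a b c > 0"
proof (rule ccontr)
  assume "\<not> area2 a b c > 0"
  hence "collinear {0, b - a, c - a}"
    by (intro cross2_zero_collinear) (simp add: area2_def)
  hence "collinear {b, a, c}" by (subst collinear_3) auto
  thus False using assms by (simp add: insert_commute)
qed

(* Lagrange's identity in the plane; it yields the Cauchy-Schwarz bound for the determinant
   and the length of the perpendicular from a point to a line. *)
lemma lagrange_identity2: "(cross2 u v)^2 + (u \<bullet> v)^2 = (norm u)^2 * (norm v)^2"
  unfolding power2_norm_eq_inner
  by (simp add: cross2_def inner_vec_def sum_2 power2_eq_square algebra_simps)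

lemma cross2_le_norm: "\<bar>cross2 u v\<bar> \<le> norm u * norm v"
proof (rule power2_le_imp_le)
  show "\<bar>cross2 u v\<bar>^2 \<le> (norm u * norm v)^2"
    by (simp add: power_mult_distrib flip: lagrange_identity2)
qed simp

lemma infdist_line:
  assumes "y \<noteq> z"
  shows "infdist x (affine hull {y, z}) = area2 y z x / dist y z"
proof -
  define u v where "u = z - y" and "v = x - y"
  have u0: "norm u > 0" using assms by (simp add: u_def)
  have dyz: "dist y z = norm u" by (simp add: u_def dist_norm norm_minus_commute)
  have area: "area2 y z x = \<bar>cross2 u v\<bar>" by (simp add: area2_def u_def v_def)
  have line: "affine hull {y, z} = {y + t *\<^sub>R u | t. True}"
    by (auto simp: affine_hull_2_alt u_def)
  have lower: "\<bar>cross2 u v\<bar> / norm u \<le> dist x w" if w_line: "w \<in> affine hull {y, z}" for w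
  proof -
    obtain t where w: "w = y + t *\<^sub>R u" using w_line unfolding line by blast
    have "cross2 u (x - w) = cross2 u v" by (simp add: w v_def cross2_def algebra_simps)
    hence "\<bar>cross2 u v\<bar> \<le> norm u * dist x w"
      using cross2_le_norm[of u "x - w"] by (simp add: dist_norm)
    thus ?thesis using u0 by (simp add: divide_le_eq mult.commute)
  qed
  define s where "s = (u \<bullet> v) / (norm u)^2"
  define w0 where "w0 = y + s *\<^sub>R u"
  have w0_line: "w0 \<in> affine hull {y, z}" using line by (auto simp: w0_def)
  have "x - w0 = v - s *\<^sub>R u" by (simp add: w0_def v_def algebra_simps)
  hence "(dist x w0)^2 = (v - s *\<^sub>R u) \<bullet> (v - s *\<^sub>R u)"
    by (simp add: dist_norm power2_norm_eq_inner)
  also have "\<dots> = v \<bullet> v - 2 * s * (u \<bullet> v) + s^2 * (u \<bullet> u)"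
    by (simp add: inner_diff inner_commute power2_eq_square algebra_simps)
  also have "\<dots> = (norm v)^2 - (u \<bullet> v)^2 / (norm u)^2"
    using u0 by (simp add: s_def flip: power2_norm_eq_inner) (simp add: field_simps power2_eq_square)
  also have "\<dots> = (cross2 u v / norm u)^2"
    using lagrange_identity2[of u v] u0 by (simp add: field_simps power_divide)
  finally have "dist x w0 = \<bar>cross2 u v\<bar> / norm u"
    by (metis abs_divide abs_norm_cancel real_sqrt_abs zero_le_dist real_sqrt_unique)
  hence "infdist x (affine hull {y, z}) \<le> \<bar>cross2 u v\<bar> / norm u"
    using infdist_le[OF w0_line, of x] by simp
  moreover have "\<bar>cross2 u v\<bar> / norm u \<le> infdist x (affine hull {y, z})"
    using lower by (simp add: infdist_notempty cINF_greatest)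
  ultimately show ?thesis by (simp add: area dyz)
qed

lemma dw_area:
  assumes "area2 x y z > 0"
  shows "dw \<epsilon> f x y z = min ((1 - \<epsilon>) * (area2 x y z / dist y z))
           (min ((1 - f) * (area2 x y z / dist x z)) ((1 - f) * (area2 x y z / dist x y)))"
proof -
  have "x \<noteq> y" "x \<noteq> z" "y \<noteq> z" using area2_pos_distinct[OF assms] by auto
  moreover have "area2 y z x = area2 x y z" "area2 x z y = area2 x y z"
    by (metis area2_swap12 area2_swap23)+
  ultimately show ?thesis by (simp add: dw_def infdist_line)
qed

lemma dw_pos:
  assumes "area2 x y z > 0" "\<epsilon> < 1" "f < 1"
  shows "dw \<epsilon> f x y z > 0"
  using assms area2_pos_distinct[OF assms(1)] by (simp add: dw_area)

lemma dw_swap_base: "dw \<epsilon> f x y z = dw \<epsilon> f x z y"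
  by (simp add: dw_def insert_commute min.left_commute min.commute)

(* The scalar core of the width comparison: with S = twice the area of abc, sides la, lb, lc
   and median md, each height term of abc beats some height term of dab.  The apex term uses
   epsilon < f, the side ab uses 2f < 1 + epsilon, and the side ac uses Apollonius:
   either 2 md > lb or la > lb. *)
lemma median_heights_lt:
  fixes S la lb lc md \<epsilon> f :: real
  assumes "S > 0" "la > 0" "lb > 0" "lc > 0" "md > 0" "4 * md^2 = 2 * lb^2 + 2 * lc^2 - la^2"
    and "\<epsilon> < f" "2 * f < 1 + \<epsilon>" "f < 1"
  shows "min ((1 - \<epsilon>) * (S / (2 * lc))) (min ((1 - f) * (S / la)) ((1 - f) * (S / (2 * md))))
         < min ((1 - \<epsilon>) * (S / la)) (min ((1 - f) * (S / lb)) ((1 - f) * (S / lc)))"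
proof -
  have apex: "(1 - f) * (S / la) < (1 - \<epsilon>) * (S / la)"
    using assms by (simp add: divide_simps)
  have short_side: "(1 - \<epsilon>) * (S / (2 * lc)) < (1 - f) * (S / lc)"
    using assms by (simp add: divide_simps)
  have "2 * md > lb \<or> la > lb"
  proof (rule ccontr)
    assume "\<not> ?thesis"
    hence "2 * md \<le> lb" "la \<le> lb" by auto
    hence "(2 * md)^2 \<le> lb^2" "la^2 \<le> lb^2"
      using assms(2,5) by (intro power_mono; simp)+
    moreover have "0 < lc^2" using assms by simp
    ultimately show False using assms(6) by (simp add: power_mult_distrib)
  qed
  hence "S / (2 * md) < S / lb \<or> S / la < S / lb"
    using assms by (auto simp: divide_strict_left_mono)
  hence "(1 - f) * (S / (2 * md)) < (1 - f) * (S / lb) \<or> (1 - f) * (S / la) < (1 - f) * (S / lb)"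
    using assms(9) by (metis diff_gt_0_iff_gt mult_strict_left_mono)
  hence base: "min ((1 - f) * (S / la)) ((1 - f) * (S / (2 * md))) < (1 - f) * (S / lb)"
    by (simp only: min_less_iff_disj) blast
  show ?thesis using apex short_side base by linarith
qed

lemma dw_median_lt:
  assumes "area2 a b c > 0" "\<epsilon> < f" "2 * f < 1 + \<epsilon>" "f < 1"
  shows "dw \<epsilon> f (midpoint b c) a b < dw \<epsilon> f a b c"
proof -
  define d where "d = midpoint b c"
  have S: "area2 d a b = area2 a b c / 2" by (simp add: d_def area2_midpoint)
  have distinct: "a \<noteq> b" "a \<noteq> c" "b \<noteq> c" "a \<noteq> d"
    using area2_pos_distinct[OF assms(1)] area2_pos_distinct[of d a b] assms(1) S by auto
  have pos: "area2 d a b > 0" using S assms(1) by simp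
  have "dw \<epsilon> f d a b = min ((1 - \<epsilon>) * (area2 a b c / (2 * dist a b)))
          (min ((1 - f) * (area2 a b c / dist b c)) ((1 - f) * (area2 a b c / (2 * dist a d))))"
    unfolding dw_area[OF pos] S using distinct by (simp add: d_def dist_midpoint dist_commute)
  also have "\<dots> < dw \<epsilon> f a b c"
    unfolding dw_area[OF assms(1)]
    by (rule median_heights_lt) (use assms distinct in \<open>simp_all add: d_def apollonius dist_commute\<close>)
  finally show ?thesis by (simp add: d_def)
qed

definition progress_bounds :: "real \<Rightarrow> real \<Rightarrow> real \<Rightarrow> real \<Rightarrow> real \<Rightarrow> real \<Rightarrow> real \<Rightarrow> bool" where
  "progress_bounds C1 C2 C3 C4 ta tb tc \<longleftrightarrow>
     \<bar>ta - tb\<bar> \<le> C1 \<and> \<bar>ta - (tb + tc) / 2\<bar> \<le> C2 \<and> \<bar>ta - tc\<bar> \<le> C3 \<and> \<bar>tb - tc\<bar> \<le> C4"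

(* How far the smallest of the three values may be raised without violating the bounds. *)
definition progress_slack :: "real \<Rightarrow> real \<Rightarrow> real \<Rightarrow> real \<Rightarrow> real" where
  "progress_slack C1 C2 C3 C4 = min (min C1 C3) (min (min C2 C4) (min (2 * C2 - C1) (2 * C2 - C3)))"

lemma progress_bounds_swap_base:
  "progress_bounds C1 C2 C3 C4 ta tb tc \<longleftrightarrow> progress_bounds C3 C2 C1 C4 ta tc tb"
  by (auto simp: progress_bounds_def abs_minus_commute add.commute)

lemma progress_slack_swap_base: "progress_slack C1 C2 C3 C4 = progress_slack C3 C2 C1 C4"
  by (simp add: progress_slack_def min.commute)

lemma raise_apex:
  assumes "progress_bounds C1 C2 C3 C4 ta tb tc" "ta \<le> tb" "ta \<le> tc"
    and "0 \<le> \<delta>" "\<delta> \<le> progress_slack C1 C2 C3 C4"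
  shows "progress_bounds C1 C2 C3 C4 (ta + \<delta>) tb tc"
  using assms unfolding progress_bounds_def progress_slack_def abs_le_iff by (auto simp: field_simps)

(* Raising the first base value when it is the smallest; here the bound on ta - td needs
   delta <= 2 C2 - C3, because tc can exceed ta by C3. *)
lemma raise_first_base:
  assumes "progress_bounds C1 C2 C3 C4 ta tb tc" "tb \<le> ta" "tb \<le> tc"
    and "0 \<le> \<delta>" "\<delta> \<le> progress_slack C1 C2 C3 C4"
  shows "progress_bounds C1 C2 C3 C4 ta (tb + \<delta>) tc"
  using assms unfolding progress_bounds_def progress_slack_def abs_le_iff by (auto simp: field_simps)

lemma raise_second_base:
  assumes "progress_bounds C1 C2 C3 C4 ta tb tc" "tc \<le> ta" "tc \<le> tb"
    and "0 \<le> \<delta>" "\<delta> \<le> progress_slack C1 C2 C3 C4"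
  shows "progress_bounds C1 C2 C3 C4 ta tb (tc + \<delta>)"
  using raise_first_base[of C3 C2 C1 C4 ta tc tb \<delta>] assms
  by (simp add: progress_bounds_swap_base[of C1] progress_slack_swap_base[of C1])

lemma raise_min_vertex:
  fixes \<tau> :: "'a \<Rightarrow> real"
  assumes "distinct [a, b, c]" "p \<in> {a, b, c}" "\<forall>x\<in>{a, b, c}. \<tau> p \<le> \<tau> x"
    and "progress_bounds C1 C2 C3 C4 (\<tau> a) (\<tau> b) (\<tau> c)"
    and "0 \<le> \<delta>" "\<delta> \<le> progress_slack C1 C2 C3 C4"
  shows "progress_bounds C1 C2 C3 C4
           ((\<tau>(p := \<tau> p + \<delta>)) a) ((\<tau>(p := \<tau> p + \<delta>)) b) ((\<tau>(p := \<tau> p + \<delta>)) c)"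
  using assms raise_apex[of C1 C2 C3 C4 "\<tau> a" "\<tau> b" "\<tau> c" \<delta>]
    raise_first_base[of C1 C2 C3 C4 "\<tau> a" "\<tau> b" "\<tau> c" \<delta>]
    raise_second_base[of C1 C2 C3 C4 "\<tau> a" "\<tau> b" "\<tau> c" \<delta>]
  by auto

lemma apc_progress_bounds:
  "apc \<epsilon> f \<sigma> a b c ta tb tc \<longleftrightarrow>
     progress_bounds (2 * dw \<epsilon> f (midpoint b c) c a * \<sigma>) (dw \<epsilon> f a b c * \<sigma>)
       (2 * dw \<epsilon> f (midpoint b c) a b * \<sigma>) (4 * dw \<epsilon> f (midpoint a c) a (midpoint b c) * \<sigma>)
       ta tb tc"
  by (simp add: apc_def progress_bounds_def Let_def)

lemma apc_slack_pos:
  assumes "area2 a b c > 0" "\<epsilon> < f" "2 * f < 1 + \<epsilon>" "f < 1" "\<sigma> > 0"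
  shows "progress_slack (2 * dw \<epsilon> f (midpoint b c) c a * \<sigma>) (dw \<epsilon> f a b c * \<sigma>)
           (2 * dw \<epsilon> f (midpoint b c) a b * \<sigma>) (4 * dw \<epsilon> f (midpoint a c) a (midpoint b c) * \<sigma>) > 0"
proof -
  have "area2 (midpoint b c) c a = area2 a c b / 2"
    using area2_midpoint(1)[of c b a] by (simp add: midpoint_sym area2_swap23[of _ c a])
  hence "area2 (midpoint b c) c a > 0" "area2 (midpoint b c) a b > 0"
       "area2 (midpoint a c) a (midpoint b c) > 0"
    using assms(1) by (simp_all add: area2_midpoint area2_swap23[of a c b])
  hence positive: "dw \<epsilon> f a b c > 0" "dw \<epsilon> f (midpoint b c) c a > 0"
      "dw \<epsilon> f (midpoint b c) a b > 0" "dw \<epsilon> f (midpoint a c) a (midpoint b c) > 0"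
    using assms dw_pos by auto
  have "dw \<epsilon> f (midpoint b c) a b < dw \<epsilon> f a b c"
    using dw_median_lt assms by blast
  moreover have "dw \<epsilon> f (midpoint b c) c a < dw \<epsilon> f a b c"
    using dw_median_lt[of a c b] assms area2_swap23[of a b c]
    by (simp add: midpoint_sym dw_swap_base[of _ _ _ c] dw_swap_base[of _ _ a c])
  ultimately show ?thesis
    using positive assms(5) by (simp add: progress_slack_def)
qed

theorem mainTheorem8:
  fixes \<epsilon> f \<sigma> :: real and p q r a b c :: "real^2"
  assumes "0 < \<epsilon>" "\<epsilon> < f" "f < (1 + \<epsilon>) / 2" "(1 + \<epsilon>) / 2 < 1" "0 < \<sigma>"
    and "\<not> collinear {p, q, r}"
    and "{a, b, c} = {p, q, r}"
  shows "\<exists>\<Delta>>0. \<forall>\<tau> :: real^2 \<Rightarrow> real.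
           \<tau> p \<le> \<tau> q \<and> \<tau> q \<le> \<tau> r \<and> apc \<epsilon> f \<sigma> a b c (\<tau> a) (\<tau> b) (\<tau> c) \<longrightarrow>
           (\<forall>\<delta>\<in>{0..\<Delta>}. let \<tau>' = \<tau>(p := \<tau> p + \<delta>) in
              apc \<epsilon> f \<sigma> a b c (\<tau>' a) (\<tau>' b) (\<tau>' c))"
proof -
  have area: "area2 a b c > 0"
    using noncollinear_area2_pos assms(6,7) by simp
  have distinct: "distinct [a, b, c]"
    using area2_pos_distinct[OF area] by simp
  define \<Delta> where "\<Delta> = progress_slack (2 * dw \<epsilon> f (midpoint b c) c a * \<sigma>) (dw \<epsilon> f a b c * \<sigma>)
      (2 * dw \<epsilon> f (midpoint b c) a b * \<sigma>) (4 * dw \<epsilon> f (midpoint a c) a (midpoint b c) * \<sigma>)"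
  have "\<Delta> > 0"
    unfolding \<Delta>_def using apc_slack_pos[OF area] assms(2-5) by simp
  moreover have "apc \<epsilon> f \<sigma> a b c (\<tau>' a) (\<tau>' b) (\<tau>' c)"
    if "\<tau> p \<le> \<tau> q" "\<tau> q \<le> \<tau> r" "apc \<epsilon> f \<sigma> a b c (\<tau> a) (\<tau> b) (\<tau> c)"
      and "\<delta> \<in> {0..\<Delta>}" and "\<tau>' = \<tau>(p := \<tau> p + \<delta>)" for \<tau> \<delta> \<tau>'
  proof -
    have "p \<in> {a, b, c}" "\<forall>x\<in>{a, b, c}. \<tau> p \<le> \<tau> x"
      using that(1,2) assms(7) by auto
    thus ?thesis
      using raise_min_vertex[OF distinct] that(3-5)
      by (simp add: apc_progress_bounds \<Delta>_def)
  qed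
  ultimately show ?thesis by (auto simp: Let_def)
qed

end
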